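(* For every integer $\alpha\ge0$, \[ W_{2\alpha+2}=\Bigl(\sum_{n\ge1}a\bigl(5^{2\alpha+2}n-\delta'_\alpha\bigr)q^n\Bigr)\prod_{n\ge1}(1-q^n)(1-q^{2n}), \] where $\delta'_\alpha=\frac{5^{2\alpha+2}-1}{8}$.
   Context: The cubic partition function $a(n)$ is defined by $\sum_{n\ge 0}a(n)q^n=\prod_{n\ge 1}\frac{1}{(1-q^n)(1-q^{2n})}$ (with $a(m)=0$ for $m<0$). Let $F=q^3\prod_{n\ge1}\frac{(1-q^{25n})(1-q^{50n})}{(1-q^n)(1-q^{2n})}$ and for a formal Laurent series $f=\sum_n c(n)q^n$ let $U(f)=\sum_n c(5n)q^n$. Define $W_1=U(F)$, and for $k\ge1$: $W_{2k}=U(W_{2k-1})$ and $W_{2k+1}=U(W_{2k}F)$. *)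

theory Defs
  imports "HOL-Computational_Algebra.Formal_Power_Series"
begin

(* Expansion of 1/(1 - q^n) as a formal power series over int: sum_{k>=0} q^(n k). *)
definition geom_fps :: "nat \<Rightarrow> int fps" where
  "geom_fps n = Abs_fps (\<lambda>k. if n dvd k then 1 else 0)"

(* Infinite product prod_{n>=1} f n of power series with f n = 1 + O(q^n):
   the coefficient of q^m is that of the finite product over 1 <= n <= m. *)
definition inf_prod_fps :: "(nat \<Rightarrow> int fps) \<Rightarrow> int fps" where
  "inf_prod_fps f = Abs_fps (\<lambda>m. fps_nth (\<Prod>n\<in>{1..m}. f n) m)"

definition cubic_gf :: "int fps" where
  "cubic_gf = inf_prod_fps (\<lambda>n. geom_fps n * geom_fps (2*n))"

definition cubic_a :: "int \<Rightarrow> int" where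
  "cubic_a m = (if m < 0 then 0 else fps_nth cubic_gf (nat m))"

definition U5 :: "int fps \<Rightarrow> int fps" where
  "U5 f = Abs_fps (\<lambda>n. fps_nth f (5*n))"

definition Fser :: "int fps" where
  "Fser = fps_X ^ 3 * inf_prod_fps (\<lambda>n. (1 - fps_X ^ (25*n)) * (1 - fps_X ^ (50*n))
                                         * geom_fps n * geom_fps (2*n))"

(* W_1 = U(F), W_{2k} = U(W_{2k-1}), W_{2k+1} = U(W_{2k} F); W 0 is unused *)
fun W :: "nat \<Rightarrow> int fps" where
  "W 0 = 0"
| "W (Suc n) = (if n = 0 then U5 Fser
                else if even (Suc n) then U5 (W n) else U5 (W n * Fser))"

end

theory Submission
  imports Defs
begin

(* Write P = prod (1-q^n)(1-q^{2n}) and G = 1/P for the generating function of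
   a(n).  The factor prod (1-q^{25n})(1-q^{50n}) of F is P(q^25), so F = P(q^25) q^3 G.
   Since U(A(q^5) B) = A U(B), applying U twice to A P F gives
       U(U(A P F)) = U(U(q^3 A)) P                                            (key step)
   because the factor P(q^25) passes through both applications of U and P G = 1.
   Hence, if W_{2a+2} = T_N P with T_N = sum_n a(N n - (N-1)/8) q^n, then
   W_{2a+4} = U(U(W_{2a+2} F)) = U(U(q^3 T_N)) P = T_{25N} P, the last step being the
   arithmetic identity N(25n-3) - (N-1)/8 = 25N n - (25N-1)/8 for N = 1 mod 8.  The base
   case is the same computation with T_1 = G, and induction gives N = 5^{2a+2}. *)

unbundle fps_syntax

section \<open>Infinite products of power series\<close>

text \<open>A series is congruent to 1 modulo q^n when its constant term is 1 and its coefficients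
  of q^1, ..., q^(n-1) vanish; the n-th factor of every product considered is of this shape.\<close>

definition one_mod_X_pow :: "nat \<Rightarrow> int fps \<Rightarrow> bool" where
  "one_mod_X_pow n A \<longleftrightarrow> A $ 0 = 1 \<and> (\<forall>k. 0 < k \<and> k < n \<longrightarrow> A $ k = 0)"

lemma mult_one_mod_X_pow_nth:
  assumes "one_mod_X_pow n A" "j < n"
  shows "(G * A) $ j = G $ j"
proof -
  have "(G * A) $ j = (\<Sum>i=0..j. G $ i * A $ (j - i))" by (rule fps_mult_nth)
  also have "\<dots> = (\<Sum>i\<in>{j}. G $ i * A $ (j - i))"
    using assms unfolding one_mod_X_pow_def by (intro sum.mono_neutral_right) auto
  also have "\<dots> = G $ j" using assms by (simp add: one_mod_X_pow_def)
  finally show ?thesis .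
qed

lemma one_mod_X_pow_mult:
  assumes "one_mod_X_pow n A" "one_mod_X_pow n B"
  shows "one_mod_X_pow n (A * B)"
  using assms mult_one_mod_X_pow_nth[OF assms(1), of _ B]
  by (auto simp: one_mod_X_pow_def mult.commute)

lemma one_mod_X_pow_one_minus: "1 \<le> n \<Longrightarrow> n \<le> d \<Longrightarrow> one_mod_X_pow n (1 - fps_X ^ d)"
  unfolding one_mod_X_pow_def by auto

lemma one_mod_X_pow_geom: "1 \<le> n \<Longrightarrow> n \<le> d \<Longrightarrow> one_mod_X_pow n (geom_fps d)"
  unfolding one_mod_X_pow_def geom_fps_def by (auto dest: dvd_imp_le)

text \<open>If the n-th factor is 1 modulo q^n, the coefficient of q^j in the partial products is
  the same for all products over 1..N with N at least j; this justifies truncating the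
  infinite product at any N beyond the coefficient of interest.\<close>

lemma prod_one_mod_X_pow_nth:
  assumes factors: "\<And>n. n \<ge> 1 \<Longrightarrow> one_mod_X_pow n (f n)" and "j \<le> N"
  shows "(\<Prod>n\<in>{1..N}. f n) $ j = (\<Prod>n\<in>{1..j}. f n) $ j"
  using assms(2)
proof (induction N rule: dec_induct)
  case base then show ?case by simp
next
  case (step N)
  have "(\<Prod>n\<in>{1..Suc N}. f n) = (\<Prod>n\<in>{1..N}. f n) * f (Suc N)"
    by (simp add: atLeastAtMostSuc_conv mult.commute)
  then show ?case
    using mult_one_mod_X_pow_nth[OF factors[of "Suc N"]] step by simp
qed

lemma inf_prod_fps_nth:
  assumes "\<And>n. n \<ge> 1 \<Longrightarrow> one_mod_X_pow n (f n)" and "j \<le> N"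
  shows "inf_prod_fps f $ j = (\<Prod>n\<in>{1..N}. f n) $ j"
  unfolding inf_prod_fps_def using prod_one_mod_X_pow_nth[OF assms] by simp

lemma fps_mult_nth_cong:
  assumes "\<And>k. k \<le> m \<Longrightarrow> A $ k = A' $ k" "\<And>k. k \<le> m \<Longrightarrow> B $ k = B' $ k"
  shows "(A * B) $ m = (A' * B') $ m"
  unfolding fps_mult_nth using assms by (intro sum.cong) auto

lemma inf_prod_fps_mult:
  assumes f: "\<And>n. n \<ge> 1 \<Longrightarrow> one_mod_X_pow n (f n)"
      and g: "\<And>n. n \<ge> 1 \<Longrightarrow> one_mod_X_pow n (g n)"
  shows "inf_prod_fps (\<lambda>n. f n * g n) = inf_prod_fps f * inf_prod_fps g"
proof (rule fps_ext)
  fix m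
  have "inf_prod_fps (\<lambda>n. f n * g n) $ m = ((\<Prod>n\<in>{1..m}. f n) * (\<Prod>n\<in>{1..m}. g n)) $ m"
    unfolding inf_prod_fps_def by (simp add: prod.distrib)
  also have "\<dots> = (inf_prod_fps f * inf_prod_fps g) $ m"
    by (rule fps_mult_nth_cong) (metis inf_prod_fps_nth[OF f], metis inf_prod_fps_nth[OF g])
  finally show "inf_prod_fps (\<lambda>n. f n * g n) $ m = (inf_prod_fps f * inf_prod_fps g) $ m" .
qed

lemma inf_prod_fps_cong:
  assumes "\<And>n. n \<ge> 1 \<Longrightarrow> f n = g n"
  shows "inf_prod_fps f = inf_prod_fps g"
  unfolding inf_prod_fps_def using assms by (intro fps_ext) (auto intro!: prod.cong)

lemma inf_prod_fps_one: "inf_prod_fps (\<lambda>n. 1) = 1"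
  unfolding inf_prod_fps_def by (intro fps_ext) simp

lemma geom_fps_inverse:
  assumes "n \<ge> 1"
  shows "geom_fps n * (1 - fps_X ^ n) = 1"
proof (rule fps_ext)
  fix k
  have "(geom_fps n * (1 - fps_X ^ n)) $ k = geom_fps n $ k - (fps_X ^ n * geom_fps n) $ k"
    by (simp add: algebra_simps)
  also have "\<dots> = (if n dvd k then 1 else 0) - (if k < n then 0 else if n dvd (k - n) then 1 else 0)"
    by (simp add: fps_X_power_mult_nth geom_fps_def)
  also have "\<dots> = (1 :: int fps) $ k"
  proof (cases "k < n")
    case True then show ?thesis using assms by (auto dest: dvd_imp_le)
  next
    case False
    then have "n dvd (k - n) \<longleftrightarrow> n dvd k" by (simp add: dvd_minus_self)
    then show ?thesis using False assms by auto
  qed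
  finally show "(geom_fps n * (1 - fps_X ^ n)) $ k = (1 :: int fps) $ k" .
qed

section \<open>Dilation q \<mapsto> q^d\<close>

definition dil :: "nat \<Rightarrow> 'a :: comm_ring_1 fps \<Rightarrow> 'a fps" where
  "dil d A = Abs_fps (\<lambda>k. if d dvd k then A $ (k div d) else 0)"

lemma dil_nth: "dil d A $ k = (if d dvd k then A $ (k div d) else 0)"
  by (simp add: dil_def)

lemma dil_mult_nth:
  assumes d: "d > 0"
  shows "(dil d A * B) $ k = (\<Sum>j=0..k div d. A $ j * B $ (k - d * j))"
proof -
  have "(dil d A * B) $ k = (\<Sum>i=0..k. dil d A $ i * B $ (k - i))" by (rule fps_mult_nth)
  also have "\<dots> = (\<Sum>i\<in>(\<lambda>j. d * j) ` {0..k div d}. dil d A $ i * B $ (k - i))"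
  proof (rule sum.mono_neutral_right)
    show "(\<lambda>j. d * j) ` {0..k div d} \<subseteq> {0..k}"
      using d by (auto simp: less_eq_div_iff_mult_less_eq mult.commute)
    show "\<forall>i\<in>{0..k} - (\<lambda>j. d * j) ` {0..k div d}. dil d A $ i * B $ (k - i) = 0"
      using d by (auto simp: dil_nth less_eq_div_iff_mult_less_eq mult.commute elim!: dvdE)
  qed simp
  also have "\<dots> = (\<Sum>j=0..k div d. A $ j * B $ (k - d * j))"
    using d by (subst sum.reindex) (auto simp: inj_on_def dil_nth)
  finally show ?thesis .
qed

lemma dil_mult:
  assumes d: "d > 0"
  shows "dil d (A * B) = dil d A * dil d B"
proof (rule fps_ext)
  fix k
  have "(dil d A * dil d B) $ k = (\<Sum>j=0..k div d. A $ j * dil d B $ (k - d * j))"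
    by (rule dil_mult_nth[OF d])
  also have "\<dots> = (\<Sum>j=0..k div d. if d dvd k then A $ j * B $ (k div d - j) else 0)"
  proof (intro sum.cong refl)
    fix j assume "j \<in> {0..k div d}"
    then have le: "d * j \<le> k" using d by (auto simp: less_eq_div_iff_mult_less_eq mult.commute)
    show "A $ j * dil d B $ (k - d * j) = (if d dvd k then A $ j * B $ (k div d - j) else 0)"
    proof (cases "d dvd k")
      case True
      then obtain m where m: "k = d * m" by auto
      with le d have "k - d * j = d * (m - j)" by (simp add: diff_mult_distrib2)
      then show ?thesis using True m d by (simp add: dil_nth)
    next
      case False
      then have "\<not> d dvd (k - d * j)"
        using le by (metis dvd_add_left_iff dvd_triv_left le_add_diff_inverse2)
      then show ?thesis using False by (simp add: dil_nth)
    qed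
  qed
  also have "\<dots> = dil d (A * B) $ k"
    by (simp add: dil_nth fps_mult_nth)
  finally show "dil d (A * B) $ k = (dil d A * dil d B) $ k" by simp
qed

lemma dil_one: "d > 0 \<Longrightarrow> dil d 1 = 1"
  by (rule fps_ext) (auto simp: dil_nth elim!: dvdE)

lemma dil_prod:
  assumes "d > 0"
  shows "dil d (\<Prod>i\<in>S. f i) = (\<Prod>i\<in>S. dil d (f i))"
  by (induction S rule: infinite_finite_induct) (simp_all add: dil_one dil_mult assms)

lemma dil_one_minus_X_power: "d > 0 \<Longrightarrow> dil d (1 - fps_X ^ n) = 1 - fps_X ^ (d * n)"
  by (rule fps_ext) (auto simp: dil_nth)

lemma dil_dil:
  assumes "c > 0" "d > 0"
  shows "dil c (dil d A) = dil (c * d) A"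
proof (rule fps_ext)
  fix k
  have "c dvd k \<and> d dvd k div c \<longleftrightarrow> c * d dvd k"
    using assms by (auto simp: mult.commute dvd_div_iff_mult elim!: dvdE)
  then show "dil c (dil d A) $ k = dil (c * d) A $ k"
    by (auto simp: dil_nth div_mult2_eq)
qed

lemma U5_dil_mult: "U5 (dil 5 A * B) = A * U5 B"
proof (rule fps_ext)
  fix n
  have "U5 (dil 5 A * B) $ n = (\<Sum>j=0..n. A $ j * B $ (5 * n - 5 * j))"
    unfolding U5_def by (simp add: dil_mult_nth)
  also have "\<dots> = (A * U5 B) $ n"
    unfolding fps_mult_nth U5_def by (intro sum.cong) (auto simp: diff_mult_distrib2)
  finally show "U5 (dil 5 A * B) $ n = (A * U5 B) $ n" .
qed

definition P_fps :: "int fps" where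
  "P_fps = inf_prod_fps (\<lambda>n. (1 - fps_X ^ n) * (1 - fps_X ^ (2 * n)))"

lemma one_mod_X_pow_P_factor: "n \<ge> 1 \<Longrightarrow> one_mod_X_pow n ((1 - fps_X ^ n) * (1 - fps_X ^ (2 * n)))"
  by (intro one_mod_X_pow_mult one_mod_X_pow_one_minus) auto

lemma one_mod_X_pow_G_factor: "n \<ge> 1 \<Longrightarrow> one_mod_X_pow n (geom_fps n * geom_fps (2 * n))"
  by (intro one_mod_X_pow_mult one_mod_X_pow_geom) auto

lemma cubic_gf_mult_P: "cubic_gf * P_fps = 1"
proof -
  have "cubic_gf * P_fps
      = inf_prod_fps (\<lambda>n. (geom_fps n * geom_fps (2 * n)) * ((1 - fps_X ^ n) * (1 - fps_X ^ (2 * n))))"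
    unfolding cubic_gf_def P_fps_def
    by (rule inf_prod_fps_mult[OF one_mod_X_pow_G_factor one_mod_X_pow_P_factor, symmetric])
  also have "\<dots> = inf_prod_fps (\<lambda>n. 1)"
  proof (rule inf_prod_fps_cong)
    fix n :: nat assume "n \<ge> 1"
    then show "(geom_fps n * geom_fps (2 * n)) * ((1 - fps_X ^ n) * (1 - fps_X ^ (2 * n))) = 1"
      using geom_fps_inverse[of n] geom_fps_inverse[of "2 * n"] by (simp add: ac_simps)
  qed
  finally show ?thesis by (simp add: inf_prod_fps_one)
qed

lemma P_dil_25: "inf_prod_fps (\<lambda>n. (1 - fps_X ^ (25 * n)) * (1 - fps_X ^ (50 * n))) = dil 25 P_fps"
proof (rule fps_ext)
  fix m
  have "inf_prod_fps (\<lambda>n. (1 - fps_X ^ (25 * n)) * (1 - fps_X ^ (50 * n))) $ m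
      = dil 25 (\<Prod>n\<in>{1..m}. (1 - fps_X ^ n) * (1 - fps_X ^ (2 * n))) $ m"
    unfolding inf_prod_fps_def by (simp add: dil_prod dil_mult dil_one_minus_X_power)
  also have "\<dots> = dil 25 P_fps $ m"
    unfolding dil_nth P_fps_def using inf_prod_fps_nth[OF one_mod_X_pow_P_factor, of "m div 25" m]
    by simp
  finally show "inf_prod_fps (\<lambda>n. (1 - fps_X ^ (25 * n)) * (1 - fps_X ^ (50 * n))) $ m
      = dil 25 P_fps $ m" .
qed

lemma Fser_eq: "Fser = dil 5 (dil 5 P_fps) * fps_X ^ 3 * cubic_gf"
proof -
  have Q: "\<And>n. n \<ge> 1 \<Longrightarrow> one_mod_X_pow n ((1 - fps_X ^ (25 * n)) * (1 - fps_X ^ (50 * n)))"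
    by (intro one_mod_X_pow_mult one_mod_X_pow_one_minus) auto
  have "inf_prod_fps (\<lambda>n. (1 - fps_X ^ (25 * n)) * (1 - fps_X ^ (50 * n)) * geom_fps n * geom_fps (2 * n))
      = inf_prod_fps (\<lambda>n. ((1 - fps_X ^ (25 * n)) * (1 - fps_X ^ (50 * n))) * (geom_fps n * geom_fps (2 * n)))"
    by (simp add: ac_simps)
  also have "\<dots> = dil 25 P_fps * cubic_gf"
    using inf_prod_fps_mult[OF Q one_mod_X_pow_G_factor] by (simp add: P_dil_25 cubic_gf_def)
  finally show ?thesis unfolding Fser_def by (simp add: dil_dil ac_simps)
qed

lemma U5_U5_mult_P_Fser: "U5 (U5 (A * P_fps * Fser)) = U5 (U5 (fps_X ^ 3 * A)) * P_fps"
proof -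
  have "A * P_fps * Fser = dil 5 (dil 5 P_fps) * (fps_X ^ 3 * A * (cubic_gf * P_fps))"
    unfolding Fser_eq by (simp add: ac_simps)
  also have "\<dots> = dil 5 (dil 5 P_fps) * (fps_X ^ 3 * A)"
    by (simp add: cubic_gf_mult_P)
  finally have "U5 (U5 (A * P_fps * Fser)) = U5 (U5 (dil 5 (dil 5 P_fps) * (fps_X ^ 3 * A)))"
    by (simp only:)
  also have "\<dots> = P_fps * U5 (U5 (fps_X ^ 3 * A))"
    by (simp only: U5_dil_mult)
  finally show ?thesis by (simp only: mult.commute)
qed

section \<open>The series T_N and the induction\<close>

definition cubic_tail :: "int \<Rightarrow> int fps" where
  "cubic_tail N = Abs_fps (\<lambda>n. cubic_a (N * int n - (N - 1) div 8))"

lemma cubic_tail_1: "cubic_tail 1 = cubic_gf"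
  by (rule fps_ext) (simp add: cubic_tail_def cubic_a_def)

lemma U5_U5_nth: "U5 (U5 A) $ n = A $ (25 * n)"
  by (simp add: U5_def)

lemma index_shift:
  fixes N m :: int
  assumes "N mod 8 = 1"
  shows "N * (25 * m - 3) - (N - 1) div 8 = 25 * N * m - (25 * N - 1) div 8"
proof -
  obtain q where q: "N = 8 * q + 1" using assms by (metis mult_div_mod_eq add.commute)
  then have "(N - 1) div 8 = q" "(25 * N - 1) div 8 = 25 * q + 3" by simp_all
  then show ?thesis using q by (simp add: algebra_simps)
qed

text \<open>U(U(q^3 T_N)) = T_{25N}; the constant terms agree because a vanishes at negative
  arguments and (25N-1)/8 is positive.\<close>

lemma U5_U5_X3_cubic_tail:
  assumes N: "N > 0" "N mod 8 = 1"
  shows "U5 (U5 (fps_X ^ 3 * cubic_tail N)) = cubic_tail (25 * N)"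
proof (rule fps_ext)
  fix n
  show "U5 (U5 (fps_X ^ 3 * cubic_tail N)) $ n = cubic_tail (25 * N) $ n"
  proof (cases "n = 0")
    case True
    have "(25 * N - 1) div 8 > 0" using N by simp
    then show ?thesis
      using True by (simp add: U5_U5_nth cubic_tail_def cubic_a_def)
  next
    case False
    then have "int (25 * n - 3) = 25 * int n - 3" by simp
    then show ?thesis
      using False index_shift[OF N(2), of "int n"]
      by (simp add: U5_U5_nth fps_X_power_mult_nth cubic_tail_def ac_simps)
  qed
qed

lemma five_power_mod_8: "(5 :: int) ^ (2 * \<alpha>) mod 8 = 1"
proof -
  have "(5 :: int) ^ (2 * \<alpha>) = 25 ^ \<alpha>" by (simp add: power_mult)
  also have "\<dots> mod 8 = (25 mod 8) ^ \<alpha> mod 8" by (rule power_mod[symmetric])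
  finally show ?thesis by simp
qed

lemma W_2: "W 2 = U5 (U5 Fser)"
  by (simp add: numeral_2_eq_2)

lemma W_step: "W (2 * \<alpha> + 4) = U5 (U5 (W (2 * \<alpha> + 2) * Fser))"
proof -
  have "W (Suc (Suc (2 * \<alpha> + 2))) = U5 (U5 (W (2 * \<alpha> + 2) * Fser))"
    using W.simps(2)[of "Suc (2 * \<alpha> + 2)"] W.simps(2)[of "2 * \<alpha> + 2"] by (simp del: W.simps)
  then show ?thesis by (simp add: eval_nat_numeral del: W.simps)
qed

lemma W_even_eq: "W (2 * \<alpha> + 2) = cubic_tail (5 ^ (2 * \<alpha> + 2)) * P_fps"
proof (induction \<alpha>)
  case 0
  have "W (2 * 0 + 2) = U5 (U5 (cubic_tail 1 * P_fps * Fser))"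
    by (simp add: W_2 cubic_tail_1 cubic_gf_mult_P)
  also have "\<dots> = cubic_tail 25 * P_fps"
    using U5_U5_X3_cubic_tail[of 1] by (simp add: U5_U5_mult_P_Fser)
  finally show ?case by simp
next
  case (Suc \<alpha>)
  let ?N = "(5 :: int) ^ (2 * \<alpha> + 2)"
  have "W (2 * Suc \<alpha> + 2) = U5 (U5 (cubic_tail ?N * P_fps * Fser))"
    using W_step[of \<alpha>] Suc.IH by simp
  also have "\<dots> = cubic_tail (25 * ?N) * P_fps"
    using U5_U5_X3_cubic_tail[of ?N] five_power_mod_8[of "\<alpha> + 1"]
    by (simp add: U5_U5_mult_P_Fser)
  also have "25 * ?N = 5 ^ (2 * Suc \<alpha> + 2)" by simp
  finally show ?case .
qed

theorem mainTheorem8: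
  fixes \<alpha> :: nat
  shows "W (2*\<alpha>+2) =
    Abs_fps (\<lambda>n. if n = 0 then 0
                 else of_int (cubic_a (5^(2*\<alpha>+2) * int n - (5^(2*\<alpha>+2) - 1) div 8)))
    * inf_prod_fps (\<lambda>n. (1 - fps_X ^ n) * (1 - fps_X ^ (2*n)))"
proof -
  have "(5 :: int) ^ (2 * \<alpha> + 2) = 25 * 5 ^ (2 * \<alpha>)" by (simp add: power_add)
  moreover have "(5 :: int) ^ (2 * \<alpha>) \<ge> 1" by simp
  ultimately have "(5 :: int) ^ (2 * \<alpha> + 2) - 1 \<ge> 8" by linarith
  then have "((5 :: int) ^ (2 * \<alpha> + 2) - 1) div 8 \<ge> 8 div 8" by (rule zdiv_mono1) simp
  then have "((5 :: int) ^ (2 * \<alpha> + 2) - 1) div 8 > 0" by simp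
  then have "cubic_tail (5 ^ (2 * \<alpha> + 2)) = Abs_fps (\<lambda>n. if n = 0 then 0
                 else of_int (cubic_a (5^(2*\<alpha>+2) * int n - (5^(2*\<alpha>+2) - 1) div 8)))"
    by (intro fps_ext) (simp add: cubic_tail_def cubic_a_def)
  then show ?thesis using W_even_eq[of \<alpha>] by (simp add: P_fps_def)
qed

end
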